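(* In the setting below, the asymmetric product $T\rtimes_\circ S$ is a simple left brace if and only if $f_z-\mathrm{id}$ is bijective on $V_z$ for every $z\in\mathbb{Z}/(n)$.
   Context: A left brace is a set $B$ with two operations $+,\cdot$ such that $(B,+)$ is an abelian group, $(B,\cdot)$ is a group and $a(b+c)+a=ab+ac$ for all $a,b,c$; $\lambda_a(b)=ab-a$. A left ideal is a subgroup $L$ of $(B,+)$ with $\lambda_b(L)\subseteq L$ for all $b$; an ideal is a left ideal that is a normal subgroup of $(B,\cdot)$; $B$ is simple if $B\neq0$ and its only ideals are $0$ and $B$. For a symmetric bi-additive map $\beta\colon X\times X\to Y$, $\mathrm{O}(X,\beta)=\{g\in\mathrm{Aut}(X,+):\beta(g(x),g(y))=\beta(x,y)\ \forall x,y\}$. Setting: $n>1$, indices $z\in\mathbb{Z}/(n)$. For each $z$, $p_z$ is a prime ($p_z\ne p_{z'}$ for $z\ne z'$), $r_z$ a positive integer, $V_z$ a finite-dimensional $\mathbb{Z}/(p_z)$-vector space with non-singular symmetric bilinear form $b_z$, and $f_z\in\mathrm{O}(V_z,b_z)$ of order $p_{z-1}$. Let $T_z=M_{r_z,r_{z-1}}(V_z)$ ($r_z\times r_{z-1}$ matrices over $V_z$) and $S_z=(\mathbb{Z}/(p_z))^{r_z}$ with standard basis $e^{(z)}_i$. Define $b'_z((u_{i,j}),(u'_{i,j}))=\sum_{i=1}^{r_z}\big(\sum_{j=1}^{r_{z-1}}b_z(u_{i,j},u'_{i,j})\big)e^{(z)}_i$ and, for $s=\sum_j\mu_je^{(z-1)}_j\in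 S_{z-1}$, $f^{(z-1,z)}_s((u_{i,j}))=(f_z^{\mu_j}(u_{i,j}))$. Let $T=T_1\times\cdots\times T_n$, $S=S_1\times\cdots\times S_n$, $b(t,t')=(b'_1(t_1,t'_1),\dots,b'_n(t_n,t'_n))$, and $\alpha_{(s_1,\dots,s_n)}(t_1,\dots,t_n)=(f^{(n,1)}_{s_n}(t_1),f^{(1,2)}_{s_1}(t_2),\dots,f^{(n-1,n)}_{s_{n-1}}(t_n))$. The asymmetric product $T\rtimes_\circ S$ is the set $T\times S$ with $(t,s)+(t',s')=(t+t',s+s'+b(t,t'))$ and $(t,s)\cdot(t',s')=(t+\alpha_s(t'),s+s')$; it is a left brace. *)

theory Defs
  imports "HOL-Algebra.Coset" "HOL-Computational_Algebra.Primes"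
begin

definition grp_of :: "'a set \<Rightarrow> ('a \<Rightarrow> 'a \<Rightarrow> 'a) \<Rightarrow> 'a monoid" where
  "grp_of B opr = \<lparr>carrier = B, monoid.mult = opr,
     one = (THE e. e \<in> B \<and> (\<forall>x\<in>B. opr e x = x \<and> opr x e = x))\<rparr>"

definition is_left_brace :: "'a set \<Rightarrow> ('a \<Rightarrow> 'a \<Rightarrow> 'a) \<Rightarrow> ('a \<Rightarrow> 'a \<Rightarrow> 'a) \<Rightarrow> bool" where
  "is_left_brace B add mul \<longleftrightarrow>
     comm_group (grp_of B add) \<and> group (grp_of B mul) \<and>
     (\<forall>a\<in>B. \<forall>b\<in>B. \<forall>c\<in>B. add (mul a (add b c)) a = add (mul a b) (mul a c))"

definition brace_lambda :: "'a set \<Rightarrow> ('a \<Rightarrow> 'a \<Rightarrow> 'a) \<Rightarrow> ('a \<Rightarrow> 'a \<Rightarrow> 'a) \<Rightarrow> 'a \<Rightarrow> 'a \<Rightarrow> 'a" where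
  "brace_lambda B add mul a x = add (mul a x) (inv\<^bsub>grp_of B add\<^esub> a)"

definition is_left_ideal :: "'a set \<Rightarrow> ('a \<Rightarrow> 'a \<Rightarrow> 'a) \<Rightarrow> ('a \<Rightarrow> 'a \<Rightarrow> 'a) \<Rightarrow> 'a set \<Rightarrow> bool" where
  "is_left_ideal B add mul L \<longleftrightarrow>
     subgroup L (grp_of B add) \<and> (\<forall>a\<in>B. \<forall>x\<in>L. brace_lambda B add mul a x \<in> L)"

definition is_brace_ideal :: "'a set \<Rightarrow> ('a \<Rightarrow> 'a \<Rightarrow> 'a) \<Rightarrow> ('a \<Rightarrow> 'a \<Rightarrow> 'a) \<Rightarrow> 'a set \<Rightarrow> bool" where
  "is_brace_ideal B add mul L \<longleftrightarrow> is_left_ideal B add mul L \<and> normal L (grp_of B mul)"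

definition is_simple_left_brace :: "'a set \<Rightarrow> ('a \<Rightarrow> 'a \<Rightarrow> 'a) \<Rightarrow> ('a \<Rightarrow> 'a \<Rightarrow> 'a) \<Rightarrow> bool" where
  "is_simple_left_brace B add mul \<longleftrightarrow>
     is_left_brace B add mul \<and> B \<noteq> {\<one>\<^bsub>grp_of B add\<^esub>} \<and>
     (\<forall>L. is_brace_ideal B add mul L \<longrightarrow> L = {\<one>\<^bsub>grp_of B add\<^esub>} \<or> L = B)"

text \<open>A d-dimensional Z/(p)-vector space is modelled as (Z/(p))^d: functions nat => int
  with values in {0..<p}, vanishing at coordinates >= d.\<close>

type_synonym vec = "nat \<Rightarrow> int"

definition Vsp :: "nat \<Rightarrow> nat \<Rightarrow> vec set" where
  "Vsp p d = {v. \<forall>k. 0 \<le> v k \<and> v k < int p \<and> (d \<le> k \<longrightarrow> v k = 0)}"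

definition vzero :: vec where "vzero = (\<lambda>k. 0)"

definition vadd :: "nat \<Rightarrow> nat \<Rightarrow> vec \<Rightarrow> vec \<Rightarrow> vec" where
  "vadd p d u v = (\<lambda>k. if k < d then (u k + v k) mod int p else 0)"

definition vsub :: "nat \<Rightarrow> nat \<Rightarrow> vec \<Rightarrow> vec \<Rightarrow> vec" where
  "vsub p d u v = (\<lambda>k. if k < d then (u k - v k) mod int p else 0)"

text \<open>Non-singular symmetric bilinear form V x V -> Z/(p) (values as integers in {0..<p});
  bilinearity over Z/(p) is the same as bi-additivity.\<close>
definition nonsing_sym_form :: "nat \<Rightarrow> nat \<Rightarrow> (vec \<Rightarrow> vec \<Rightarrow> int) \<Rightarrow> bool" where
  "nonsing_sym_form p d \<beta> \<longleftrightarrow>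
     (\<forall>u\<in>Vsp p d. \<forall>v\<in>Vsp p d. 0 \<le> \<beta> u v \<and> \<beta> u v < int p \<and> \<beta> u v = \<beta> v u) \<and>
     (\<forall>u\<in>Vsp p d. \<forall>v\<in>Vsp p d. \<forall>w\<in>Vsp p d. \<beta> (vadd p d u v) w = (\<beta> u w + \<beta> v w) mod int p) \<and>
     (\<forall>u\<in>Vsp p d. (\<forall>v\<in>Vsp p d. \<beta> u v = 0) \<longrightarrow> u = vzero)"

definition orth_grp :: "nat \<Rightarrow> nat \<Rightarrow> (vec \<Rightarrow> vec \<Rightarrow> int) \<Rightarrow> (vec \<Rightarrow> vec) set" where
  "orth_grp p d \<beta> = {g. bij_betw g (Vsp p d) (Vsp p d) \<and>
     (\<forall>u\<in>Vsp p d. \<forall>v\<in>Vsp p d. g (vadd p d u v) = vadd p d (g u) (g v)) \<and>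
     (\<forall>u\<in>Vsp p d. \<forall>v\<in>Vsp p d. \<beta> (g u) (g v) = \<beta> u v)}"

definition has_order_on :: "vec set \<Rightarrow> (vec \<Rightarrow> vec) \<Rightarrow> nat \<Rightarrow> bool" where
  "has_order_on V g k \<longleftrightarrow> 0 < k \<and> (\<forall>u\<in>V. (g ^^ k) u = u) \<and>
     (\<forall>j. 0 < j \<and> j < k \<longrightarrow> (\<exists>u\<in>V. (g ^^ j) u \<noteq> u))"

text \<open>Indices Z/(n) are represented by 0..<n; z-1 is cprev n z.\<close>
definition cprev :: "nat \<Rightarrow> nat \<Rightarrow> nat" where "cprev n z = (z + n - 1) mod n"

type_synonym tcomp = "nat \<Rightarrow> nat \<Rightarrow> nat \<Rightarrow> vec"   \<comment> \<open>z, i, j \<mapsto> (t_z)_{i,j}\<close>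
type_synonym scomp = "nat \<Rightarrow> nat \<Rightarrow> int"         \<comment> \<open>z, i \<mapsto> i-th coefficient of s_z\<close>

definition AP_T :: "nat \<Rightarrow> (nat \<Rightarrow> nat) \<Rightarrow> (nat \<Rightarrow> nat) \<Rightarrow> (nat \<Rightarrow> nat) \<Rightarrow> tcomp set" where
  "AP_T n p r d = {t. \<forall>z i j. if z < n \<and> i < r z \<and> j < r (cprev n z)
      then t z i j \<in> Vsp (p z) (d z) else t z i j = vzero}"

definition AP_S :: "nat \<Rightarrow> (nat \<Rightarrow> nat) \<Rightarrow> (nat \<Rightarrow> nat) \<Rightarrow> scomp set" where
  "AP_S n p r = {s. \<forall>z i. if z < n \<and> i < r z
      then 0 \<le> s z i \<and> s z i < int (p z) else s z i = 0}"

definition AP_carrier :: "nat \<Rightarrow> (nat \<Rightarrow> nat) \<Rightarrow> (nat \<Rightarrow> nat) \<Rightarrow> (nat \<Rightarrow> nat) \<Rightarrow> (tcomp \<times> scomp) set" where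
  "AP_carrier n p r d = AP_T n p r d \<times> AP_S n p r"

definition AP_tadd :: "nat \<Rightarrow> (nat \<Rightarrow> nat) \<Rightarrow> (nat \<Rightarrow> nat) \<Rightarrow> (nat \<Rightarrow> nat) \<Rightarrow> tcomp \<Rightarrow> tcomp \<Rightarrow> tcomp" where
  "AP_tadd n p r d t t' = (\<lambda>z i j. if z < n \<and> i < r z \<and> j < r (cprev n z)
      then vadd (p z) (d z) (t z i j) (t' z i j) else vzero)"

definition AP_sadd :: "nat \<Rightarrow> (nat \<Rightarrow> nat) \<Rightarrow> (nat \<Rightarrow> nat) \<Rightarrow> scomp \<Rightarrow> scomp \<Rightarrow> scomp" where
  "AP_sadd n p r s s' = (\<lambda>z i. if z < n \<and> i < r z then (s z i + s' z i) mod int (p z) else 0)"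

definition AP_b :: "nat \<Rightarrow> (nat \<Rightarrow> nat) \<Rightarrow> (nat \<Rightarrow> nat) \<Rightarrow> (nat \<Rightarrow> vec \<Rightarrow> vec \<Rightarrow> int) \<Rightarrow> tcomp \<Rightarrow> tcomp \<Rightarrow> scomp" where
  "AP_b n p r b t t' = (\<lambda>z i. if z < n \<and> i < r z
      then (\<Sum>j<r (cprev n z). b z (t z i j) (t' z i j)) mod int (p z) else 0)"

text \<open>alpha_s(t)_z = f^{(z-1,z)}_{s_{z-1}}(t_z), i.e. entry (i,j) is f_z^{mu_j}(u_ij) with
  s_{z-1} = sum_j mu_j e_j.\<close>
definition AP_alpha :: "nat \<Rightarrow> (nat \<Rightarrow> nat) \<Rightarrow> (nat \<Rightarrow> nat) \<Rightarrow> (nat \<Rightarrow> vec \<Rightarrow> vec) \<Rightarrow> scomp \<Rightarrow> tcomp \<Rightarrow> tcomp" where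
  "AP_alpha n p r f s t = (\<lambda>z i j. if z < n \<and> i < r z \<and> j < r (cprev n z)
      then (f z ^^ nat (s (cprev n z) j)) (t z i j) else vzero)"

definition AP_add :: "nat \<Rightarrow> (nat \<Rightarrow> nat) \<Rightarrow> (nat \<Rightarrow> nat) \<Rightarrow> (nat \<Rightarrow> nat) \<Rightarrow> (nat \<Rightarrow> vec \<Rightarrow> vec \<Rightarrow> int)
    \<Rightarrow> tcomp \<times> scomp \<Rightarrow> tcomp \<times> scomp \<Rightarrow> tcomp \<times> scomp" where
  "AP_add n p r d b x y =
     (AP_tadd n p r d (fst x) (fst y),
      AP_sadd n p r (AP_sadd n p r (snd x) (snd y)) (AP_b n p r b (fst x) (fst y)))"

definition AP_mul :: "nat \<Rightarrow> (nat \<Rightarrow> nat) \<Rightarrow> (nat \<Rightarrow> nat) \<Rightarrow> (nat \<Rightarrow> nat) \<Rightarrow> (nat \<Rightarrow> vec \<Rightarrow> vec)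
    \<Rightarrow> tcomp \<times> scomp \<Rightarrow> tcomp \<times> scomp \<Rightarrow> tcomp \<times> scomp" where
  "AP_mul n p r d f x y =
     (AP_tadd n p r d (fst x) (AP_alpha n p r f (snd x) (fst y)),
      AP_sadd n p r (snd x) (snd y))"

end

theory Submission
  imports Defs
begin

(*
  If W is a subgroup of T containing every
  t - alpha_s(t), then W \<times> S is an ideal; when f_z - id is not bijective, the matrices whose block
  at z has entries in the image of f_z - id form such a W, proper because V_z is finite.

  Conversely, let every f_z - id be bijective and let I be a nonzero ideal.  Since
  lambda_(-t,0)(x) - x = (0, b(t_x, t)) and b is non-degenerate, I contains some (0, s) with a
  nonzero coordinate mu of s_(z-1).  Conjugating (t, 0) by (0, s) puts (t - alpha_s(t), s) into I,
  and f_z^mu - id is again bijective (mu is invertible modulo the prime order of f_z), so every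
  elementary matrix of T_z is the first coordinate of an element of I; pairing these with b gives
  0 \<times> S_z \<subseteq> I.  Going once around Z/(n) yields 0 \<times> S \<subseteq> I, and then I = T \<times> S.
*)

lemma grp_of_carrier [simp]: "carrier (grp_of B opr) = B"
  and grp_of_mult [simp]: "monoid.mult (grp_of B opr) = opr"
  by (simp_all add: grp_of_def)

lemma grp_of_one:
  assumes "e \<in> B" "\<And>x. x \<in> B \<Longrightarrow> opr e x = x \<and> opr x e = x"
  shows "\<one>\<^bsub>grp_of B opr\<^esub> = e"
  unfolding grp_of_def by (simp, rule the_equality) (use assms in metis)+

lemma group_grp_ofI:
  assumes "\<And>x y. x \<in> B \<Longrightarrow> y \<in> B \<Longrightarrow> opr x y \<in> B"
    and "\<And>x y z. x \<in> B \<Longrightarrow> y \<in> B \<Longrightarrow> z \<in> B \<Longrightarrow> opr (opr x y) z = opr x (opr y z)"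
    and "e \<in> B" "\<And>x. x \<in> B \<Longrightarrow> opr e x = x \<and> opr x e = x"
    and "\<And>x. x \<in> B \<Longrightarrow> \<exists>y\<in>B. opr y x = e"
  shows "group (grp_of B opr)"
  by (rule groupI) (use assms grp_of_one[of e B opr] in auto)

lemma comm_group_grp_ofI:
  assumes "\<And>x y. x \<in> B \<Longrightarrow> y \<in> B \<Longrightarrow> opr x y \<in> B"
    and "\<And>x y z. x \<in> B \<Longrightarrow> y \<in> B \<Longrightarrow> z \<in> B \<Longrightarrow> opr (opr x y) z = opr x (opr y z)"
    and "\<And>x y. x \<in> B \<Longrightarrow> y \<in> B \<Longrightarrow> opr x y = opr y x"
    and "e \<in> B" "\<And>x. x \<in> B \<Longrightarrow> opr e x = x \<and> opr x e = x"
    and "\<And>x. x \<in> B \<Longrightarrow> \<exists>y\<in>B. opr y x = e"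
  shows "comm_group (grp_of B opr)"
  by (rule comm_groupI) (use assms grp_of_one[of e B opr] in auto)

section \<open>Asymmetric products\<close>

definition asym_add :: "('t \<Rightarrow> 't \<Rightarrow> 't) \<Rightarrow> ('s \<Rightarrow> 's \<Rightarrow> 's) \<Rightarrow> ('t \<Rightarrow> 't \<Rightarrow> 's)
    \<Rightarrow> 't \<times> 's \<Rightarrow> 't \<times> 's \<Rightarrow> 't \<times> 's" where
  "asym_add tadd sadd bf x y = (tadd (fst x) (fst y), sadd (sadd (snd x) (snd y)) (bf (fst x) (fst y)))"

definition asym_mul :: "('t \<Rightarrow> 't \<Rightarrow> 't) \<Rightarrow> ('s \<Rightarrow> 's \<Rightarrow> 's) \<Rightarrow> ('s \<Rightarrow> 't \<Rightarrow> 't)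
    \<Rightarrow> 't \<times> 's \<Rightarrow> 't \<times> 's \<Rightarrow> 't \<times> 's" where
  "asym_mul tadd sadd alpha x y = (tadd (fst x) (alpha (snd x) (fst y)), sadd (snd x) (snd y))"

locale asym_product =
  fixes T :: "'t set" and tadd :: "'t \<Rightarrow> 't \<Rightarrow> 't" and tzero :: 't and tneg :: "'t \<Rightarrow> 't"
    and S :: "'s set" and sadd :: "'s \<Rightarrow> 's \<Rightarrow> 's" and szero :: 's and sneg :: "'s \<Rightarrow> 's"
    and bf :: "'t \<Rightarrow> 't \<Rightarrow> 's" and alpha :: "'s \<Rightarrow> 't \<Rightarrow> 't"
  assumes tadd_ac: "abel_semigroup tadd" and sadd_ac: "abel_semigroup sadd"
    and tadd_closed [simp]: "t \<in> T \<Longrightarrow> t' \<in> T \<Longrightarrow> tadd t t' \<in> T"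
    and tzero_closed [simp]: "tzero \<in> T" and tneg_closed [simp]: "t \<in> T \<Longrightarrow> tneg t \<in> T"
    and tadd_tzero_left [simp]: "t \<in> T \<Longrightarrow> tadd tzero t = t"
    and tadd_tneg_right [simp]: "t \<in> T \<Longrightarrow> tadd t (tneg t) = tzero"
    and sadd_closed [simp]: "s \<in> S \<Longrightarrow> s' \<in> S \<Longrightarrow> sadd s s' \<in> S"
    and szero_closed [simp]: "szero \<in> S" and sneg_closed [simp]: "s \<in> S \<Longrightarrow> sneg s \<in> S"
    and sadd_szero_left [simp]: "s \<in> S \<Longrightarrow> sadd szero s = s"
    and sadd_sneg_right [simp]: "s \<in> S \<Longrightarrow> sadd s (sneg s) = szero"
    and bf_closed [simp]: "t \<in> T \<Longrightarrow> t' \<in> T \<Longrightarrow> bf t t' \<in> S"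
    and bf_sym: "t \<in> T \<Longrightarrow> t' \<in> T \<Longrightarrow> bf t t' = bf t' t"
    and bf_add_left: "t \<in> T \<Longrightarrow> t' \<in> T \<Longrightarrow> t'' \<in> T \<Longrightarrow> bf (tadd t t') t'' = sadd (bf t t'') (bf t' t'')"
    and alpha_closed [simp]: "s \<in> S \<Longrightarrow> t \<in> T \<Longrightarrow> alpha s t \<in> T"
    and alpha_tadd: "s \<in> S \<Longrightarrow> t \<in> T \<Longrightarrow> t' \<in> T \<Longrightarrow> alpha s (tadd t t') = tadd (alpha s t) (alpha s t')"
    and alpha_szero [simp]: "t \<in> T \<Longrightarrow> alpha szero t = t"
    and alpha_sadd: "s \<in> S \<Longrightarrow> s' \<in> S \<Longrightarrow> t \<in> T \<Longrightarrow> alpha (sadd s s') t = alpha s (alpha s' t)"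
    and bf_alpha [simp]: "s \<in> S \<Longrightarrow> t \<in> T \<Longrightarrow> t' \<in> T \<Longrightarrow> bf (alpha s t) (alpha s t') = bf t t'"
begin

sublocale ta: abel_semigroup tadd by (rule tadd_ac)
sublocale sa: abel_semigroup sadd by (rule sadd_ac)

lemma tadd_tzero_right [simp]: "t \<in> T \<Longrightarrow> tadd t tzero = t" by (metis ta.commute tadd_tzero_left)
lemma tadd_tneg_left [simp]: "t \<in> T \<Longrightarrow> tadd (tneg t) t = tzero" by (metis ta.commute tadd_tneg_right)
lemma sadd_szero_right [simp]: "s \<in> S \<Longrightarrow> sadd s szero = s" by (metis sa.commute sadd_szero_left)
lemma sadd_sneg_left [simp]: "s \<in> S \<Longrightarrow> sadd (sneg s) s = szero" by (metis sa.commute sadd_sneg_right)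

lemma tadd_left_cancel:
  assumes "a \<in> T" "x \<in> T" "y \<in> T" "tadd a x = tadd a y" shows "x = y"
proof -
  have "tadd (tneg a) (tadd a x) = tadd (tneg a) (tadd a y)" using assms by simp
  then have "tadd (tadd (tneg a) a) x = tadd (tadd (tneg a) a) y" by (simp add: ta.assoc)
  then show ?thesis using assms by simp
qed

lemma sadd_left_cancel:
  assumes "a \<in> S" "x \<in> S" "y \<in> S" "sadd a x = sadd a y" shows "x = y"
proof -
  have "sadd (sneg a) (sadd a x) = sadd (sneg a) (sadd a y)" using assms by simp
  then have "sadd (sadd (sneg a) a) x = sadd (sadd (sneg a) a) y" by (simp add: sa.assoc)
  then show ?thesis using assms by simp
qed

lemma tneg_unique: "a \<in> T \<Longrightarrow> x \<in> T \<Longrightarrow> tadd a x = tzero \<Longrightarrow> x = tneg a"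
  by (rule tadd_left_cancel[of a]) auto

lemma sneg_unique: "a \<in> S \<Longrightarrow> x \<in> S \<Longrightarrow> sadd a x = szero \<Longrightarrow> x = sneg a"
  by (rule sadd_left_cancel[of a]) auto

lemma sneg_sneg [simp]: "s \<in> S \<Longrightarrow> sneg (sneg s) = s"
  by (metis sneg_closed sadd_sneg_left sneg_unique)

lemma sneg_szero [simp]: "sneg szero = szero"
  by (metis szero_closed sadd_szero_left sneg_unique)

lemma tadd_tneg_cancel_left [simp]: "a \<in> T \<Longrightarrow> x \<in> T \<Longrightarrow> tadd (tneg a) (tadd a x) = x"
  by (simp flip: ta.assoc)

lemma sneg_sadd: "s \<in> S \<Longrightarrow> s' \<in> S \<Longrightarrow> sneg (sadd s s') = sadd (sneg s) (sneg s')"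
  by (rule sneg_unique[symmetric]) (simp_all add: sa.assoc sa.left_commute[of s'])

lemma bf_add_right: "t \<in> T \<Longrightarrow> t' \<in> T \<Longrightarrow> t'' \<in> T \<Longrightarrow> bf t'' (tadd t t') = sadd (bf t'' t) (bf t'' t')"
  by (metis bf_add_left bf_sym tadd_closed)

lemma bf_tzero_left [simp]: "t \<in> T \<Longrightarrow> bf tzero t = szero"
  using bf_add_left[of tzero tzero t] sadd_left_cancel[of "bf tzero t" szero "bf tzero t"] by simp

lemma bf_tzero_right [simp]: "t \<in> T \<Longrightarrow> bf t tzero = szero"
  by (metis bf_sym bf_tzero_left tzero_closed)

lemma bf_tneg_left: "t \<in> T \<Longrightarrow> t' \<in> T \<Longrightarrow> bf (tneg t) t' = sneg (bf t t')"
  by (metis bf_add_left bf_tzero_left tadd_tneg_right bf_closed tneg_closed sneg_unique)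

lemma bf_tneg_right: "t \<in> T \<Longrightarrow> t' \<in> T \<Longrightarrow> bf t' (tneg t) = sneg (bf t' t)"
  by (metis bf_tneg_left bf_sym tneg_closed)

lemma alpha_tzero [simp]: "s \<in> S \<Longrightarrow> alpha s tzero = tzero"
  using alpha_tadd[of s tzero tzero] tadd_left_cancel[of "alpha s tzero" tzero "alpha s tzero"] by simp

lemma alpha_tneg: "s \<in> S \<Longrightarrow> t \<in> T \<Longrightarrow> alpha s (tneg t) = tneg (alpha s t)"
  by (metis alpha_closed alpha_tadd alpha_tzero tneg_closed tadd_tneg_right tneg_unique)

lemma alpha_sneg_cancel [simp]: "s \<in> S \<Longrightarrow> t \<in> T \<Longrightarrow> alpha s (alpha (sneg s) t) = t"
  by (metis alpha_sadd alpha_szero sneg_closed sadd_sneg_right)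

abbreviation "B \<equiv> T \<times> S"
abbreviation "padd \<equiv> asym_add tadd sadd bf"
abbreviation "pmul \<equiv> asym_mul tadd sadd alpha"

definition "ainv x = (tneg (fst x), sadd (sneg (snd x)) (bf (fst x) (fst x)))"
definition "minv x = (tneg (alpha (sneg (snd x)) (fst x)), sneg (snd x))"

lemma padd_closed: "x \<in> B \<Longrightarrow> y \<in> B \<Longrightarrow> padd x y \<in> B"
  and pmul_closed: "x \<in> B \<Longrightarrow> y \<in> B \<Longrightarrow> pmul x y \<in> B"
  and ainv_closed: "x \<in> B \<Longrightarrow> ainv x \<in> B"
  and minv_closed: "x \<in> B \<Longrightarrow> minv x \<in> B"
  by (auto simp: asym_add_def asym_mul_def ainv_def minv_def)

lemma padd_assoc: "x \<in> B \<Longrightarrow> y \<in> B \<Longrightarrow> z \<in> B \<Longrightarrow> padd (padd x y) z = padd x (padd y z)"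
  by (auto simp: asym_add_def bf_add_left bf_add_right ac_simps)

lemma padd_comm: "x \<in> B \<Longrightarrow> y \<in> B \<Longrightarrow> padd x y = padd y x"
  by (auto simp: asym_add_def ac_simps bf_sym)

lemma padd_zero: "x \<in> B \<Longrightarrow> padd (tzero, szero) x = x \<and> padd x (tzero, szero) = x"
  by (auto simp: asym_add_def)

lemma ainv_padd: "x \<in> B \<Longrightarrow> padd (ainv x) x = (tzero, szero)"
  by (auto simp: asym_add_def ainv_def bf_tneg_left sa.assoc sa.left_commute[of "bf _ _"])

lemma pmul_assoc: "x \<in> B \<Longrightarrow> y \<in> B \<Longrightarrow> z \<in> B \<Longrightarrow> pmul (pmul x y) z = pmul x (pmul y z)"
  by (auto simp: asym_mul_def alpha_tadd alpha_sadd ac_simps)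

lemma pmul_one: "x \<in> B \<Longrightarrow> pmul (tzero, szero) x = x \<and> pmul x (tzero, szero) = x"
  by (auto simp: asym_mul_def)

lemma minv_pmul: "x \<in> B \<Longrightarrow> pmul (minv x) x = (tzero, szero)"
  by (auto simp: asym_mul_def minv_def)

lemma add_comm_group: "comm_group (grp_of B padd)"
proof (rule comm_group_grp_ofI[where e = "(tzero, szero)"])
  show "\<exists>y\<in>B. padd y x = (tzero, szero)" if "x \<in> B" for x
    using ainv_closed ainv_padd that by blast
next
  show "padd x y = padd y x" if "x \<in> B" "y \<in> B" for x y
    using padd_comm that .
qed (simp_all add: padd_closed padd_assoc padd_zero)

lemma mul_group: "group (grp_of B pmul)"
proof (rule group_grp_ofI[where e = "(tzero, szero)"])
  show "\<exists>y\<in>B. pmul y x = (tzero, szero)" if "x \<in> B" for x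
    using minv_closed minv_pmul that by blast
qed (simp_all add: pmul_closed pmul_assoc pmul_one)

lemma add_one [simp]: "\<one>\<^bsub>grp_of B padd\<^esub> = (tzero, szero)"
  by (rule grp_of_one) (use padd_zero in auto)

lemma mul_one [simp]: "\<one>\<^bsub>grp_of B pmul\<^esub> = (tzero, szero)"
  by (rule grp_of_one) (use pmul_one in auto)

lemma add_inv [simp]: "x \<in> B \<Longrightarrow> inv\<^bsub>grp_of B padd\<^esub> x = ainv x"
  using group.inv_equality[OF comm_group.axioms(2)[OF add_comm_group], of "ainv x" x]
  by (simp add: ainv_padd ainv_closed)

lemma mul_inv [simp]: "x \<in> B \<Longrightarrow> inv\<^bsub>grp_of B pmul\<^esub> x = minv x"
  using group.inv_equality[OF mul_group, of "minv x" x]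
  by (simp add: minv_pmul minv_closed)

lemma left_brace_law:
  assumes "a \<in> B" "x \<in> B" "y \<in> B"
  shows "padd (pmul a (padd x y)) a = padd (pmul a x) (pmul a y)"
proof -
  obtain t s t1 s1 t2 s2 where v: "a = (t, s)" "x = (t1, s1)" "y = (t2, s2)"
    and mem: "t \<in> T" "s \<in> S" "t1 \<in> T" "s1 \<in> S" "t2 \<in> T" "s2 \<in> S"
    using assms by auto
  have "bf t (alpha s t2) = bf (alpha s t2) t" using mem by (simp add: bf_sym)
  then show ?thesis using v mem
    by (simp add: asym_mul_def asym_add_def alpha_tadd bf_add_left bf_add_right ac_simps)
qed

lemma is_left_brace: "is_left_brace B padd pmul"
  unfolding is_left_brace_def using add_comm_group mul_group left_brace_law by auto

lemma brace_lambda_eq: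
  assumes "a \<in> B" "x \<in> B"
  shows "brace_lambda B padd pmul a x =
    (alpha (snd a) (fst x), sadd (snd x) (sneg (bf (alpha (snd a) (fst x)) (fst a))))"
proof -
  obtain ta sa tx sx where v: "a = (ta, sa)" "x = (tx, sx)"
    and mem: "ta \<in> T" "sa \<in> S" "tx \<in> T" "sx \<in> S"
    using assms by auto
  have "tadd (tadd ta (alpha sa tx)) (tneg ta) = tadd (tadd ta (tneg ta)) (alpha sa tx)"
    by (simp add: ac_simps)
  moreover have "bf (tadd ta (alpha sa tx)) (tneg ta) = sadd (sneg (bf ta ta)) (sneg (bf (alpha sa tx) ta))"
    using mem by (simp add: bf_add_left bf_tneg_right sneg_sadd)
  moreover have "sadd (sadd (sadd sa sx) (sadd (sneg sa) (bf ta ta))) (sadd (sneg (bf ta ta)) (sneg (bf (alpha sa tx) ta)))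
      = sadd (sadd sa (sneg sa)) (sadd (sadd (bf ta ta) (sneg (bf ta ta))) (sadd sx (sneg (bf (alpha sa tx) ta))))"
    by (simp add: ac_simps)
  ultimately show ?thesis using v mem
    by (simp add: brace_lambda_def asym_mul_def asym_add_def ainv_def)
qed

(* alpha_s(w) = w - (w - alpha_s(w)) *)
lemma alpha_in_subgroup:
  assumes W: "W \<subseteq> T" "\<And>w w'. w \<in> W \<Longrightarrow> w' \<in> W \<Longrightarrow> tadd w w' \<in> W" "\<And>w. w \<in> W \<Longrightarrow> tneg w \<in> W"
    and aug: "\<And>s t. s \<in> S \<Longrightarrow> t \<in> T \<Longrightarrow> tadd t (tneg (alpha s t)) \<in> W"
    and "s \<in> S" "w \<in> W"
  shows "alpha s w \<in> W"
proof -
  have w: "w \<in> T" using assms W(1) by auto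
  have "tneg (tadd w (tneg (alpha s w))) = tadd (alpha s w) (tneg w)"
    by (rule tneg_unique[symmetric]) (use assms w in \<open>simp_all add: ta.assoc\<close>)
  then have "tadd w (tneg (tadd w (tneg (alpha s w)))) = alpha s w"
    using assms w by (simp add: ta.left_commute[of w])
  then show ?thesis using W aug assms w by metis
qed

lemma brace_ideal_Times_S:
  assumes W: "W \<subseteq> T" "tzero \<in> W" "\<And>w w'. w \<in> W \<Longrightarrow> w' \<in> W \<Longrightarrow> tadd w w' \<in> W"
      "\<And>w. w \<in> W \<Longrightarrow> tneg w \<in> W"
    and aug: "\<And>s t. s \<in> S \<Longrightarrow> t \<in> T \<Longrightarrow> tadd t (tneg (alpha s t)) \<in> W"
  shows "is_brace_ideal B padd pmul (W \<times> S)"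
proof -
  have alpha_W: "alpha s w \<in> W" if "s \<in> S" "w \<in> W" for s w
    using alpha_in_subgroup[OF W(1,3,4) aug that] .
  have WS: "W \<times> S \<subseteq> B" using W(1) by auto
  have ne: "W \<times> S \<noteq> {}" using W(2) szero_closed by blast
  have "subgroup (W \<times> S) (grp_of B padd)"
    by (rule group.subgroupI[OF comm_group.axioms(2)[OF add_comm_group]])
      (use W WS ne in \<open>auto simp: ainv_def asym_add_def subset_iff\<close>)
  then have left_ideal: "is_left_ideal B padd pmul (W \<times> S)"
    unfolding is_left_ideal_def using brace_lambda_eq alpha_W WS by (auto simp: subset_iff)
  have sub_mul: "subgroup (W \<times> S) (grp_of B pmul)"
    by (rule group.subgroupI[OF mul_group]) (use W WS ne alpha_W in \<open>auto simp: minv_def asym_mul_def subset_iff\<close>)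
  have conj: "pmul (pmul g h) (minv g) \<in> W \<times> S" if gh: "g \<in> B" "h \<in> W \<times> S" for g h
  proof -
    obtain t s w s' where v: "g = (t, s)" "h = (w, s')" "t \<in> T" "s \<in> S" "w \<in> W" "s' \<in> S"
      using gh by auto
    have wT: "w \<in> T" using v W(1) by auto
    have "alpha (sadd s s') (tneg (alpha (sneg s) t)) = alpha s' (tneg t)"
      using v by (simp add: sa.commute[of s s'] alpha_sadd alpha_tneg)
    moreover have "tadd (tadd t (alpha s w)) (alpha s' (tneg t)) = tadd (alpha s w) (tadd t (tneg (alpha s' t)))"
      using v wT by (simp add: alpha_tneg ac_simps)
    moreover have "\<dots> \<in> W" using v W aug alpha_W by auto
    ultimately show ?thesis using v wT by (simp add: asym_mul_def minv_def)
  qed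
  have "normal (W \<times> S) (grp_of B pmul)"
    by (subst group.normal_inv_iff[OF mul_group]) (use sub_mul conj in \<open>auto simp: subset_iff\<close>)
  with left_ideal show ?thesis unfolding is_brace_ideal_def by auto
qed

lemma not_simple_if_proper_subgroup:
  assumes W: "W \<subseteq> T" "tzero \<in> W" "\<And>w w'. w \<in> W \<Longrightarrow> w' \<in> W \<Longrightarrow> tadd w w' \<in> W"
      "\<And>w. w \<in> W \<Longrightarrow> tneg w \<in> W"
    and aug: "\<And>s t. s \<in> S \<Longrightarrow> t \<in> T \<Longrightarrow> tadd t (tneg (alpha s t)) \<in> W"
    and proper: "W \<noteq> T" and s0: "s0 \<in> S" "s0 \<noteq> szero"
  shows "\<not> is_simple_left_brace B padd pmul"
proof
  assume "is_simple_left_brace B padd pmul"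
  then have "W \<times> S = {(tzero, szero)} \<or> W \<times> S = B"
    using brace_ideal_Times_S[OF W aug] unfolding is_simple_left_brace_def by auto
  moreover have "(tzero, s0) \<in> W \<times> S" using W s0 by auto
  moreover obtain t where "t \<in> T" "t \<notin> W" using proper W(1) by auto
  ultimately show False using s0 by auto
qed

context
  fixes I assumes I: "is_brace_ideal B padd pmul I"
begin

lemma ideal_add_subgroup: "subgroup I (grp_of B padd)"
  using I unfolding is_brace_ideal_def is_left_ideal_def by auto

lemma ideal_subset: "I \<subseteq> B"
  using subgroup.subset[OF ideal_add_subgroup] by simp

lemma ideal_zero: "(tzero, szero) \<in> I"
  using subgroup.one_closed[OF ideal_add_subgroup] by simp

lemma ideal_padd: "x \<in> I \<Longrightarrow> y \<in> I \<Longrightarrow> padd x y \<in> I"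
  using subgroup.m_closed[OF ideal_add_subgroup] by simp

lemma ideal_ainv: "x \<in> I \<Longrightarrow> ainv x \<in> I"
  by (metis ideal_add_subgroup add_inv subgroup.m_inv_closed subsetD ideal_subset)

lemma ideal_lambda: "a \<in> B \<Longrightarrow> x \<in> I \<Longrightarrow> brace_lambda B padd pmul a x \<in> I"
  using I unfolding is_brace_ideal_def is_left_ideal_def by auto

lemma ideal_conj: "g \<in> B \<Longrightarrow> x \<in> I \<Longrightarrow> pmul (pmul g x) (minv g) \<in> I"
  using I group.normal_inv_iff[OF mul_group] unfolding is_brace_ideal_def by auto

(* lambda_(-t,0)(x) - x = (0, b(t_x, t)) *)
lemma ideal_bf_value:
  assumes x: "x \<in> I" and t: "t \<in> T"
  shows "(tzero, bf (fst x) t) \<in> I"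
proof -
  obtain t' s' where v: "x = (t', s')" "t' \<in> T" "s' \<in> S" using x ideal_subset by auto
  have "brace_lambda B padd pmul (tneg t, szero) x = (t', sadd s' (bf t' t))"
    using v t by (simp add: brace_lambda_eq bf_tneg_right)
  then have "padd (t', sadd s' (bf t' t)) (ainv x) \<in> I"
    using ideal_padd ideal_lambda ideal_ainv x t by (metis mem_Sigma_iff szero_closed tneg_closed)
  moreover have "sadd (sadd (sadd s' (bf t' t)) (sadd (sneg s') (bf t' t'))) (bf t' (tneg t'))
     = sadd (sadd s' (sneg s')) (sadd (sadd (bf t' t') (sneg (bf t' t'))) (bf t' t))"
    using v by (simp only: bf_tneg_right[OF v(2) v(2)] ac_simps)
  ultimately show ?thesis using v t by (simp add: asym_add_def ainv_def)
qed

lemma ideal_alpha_defect: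
  assumes "(tzero, s) \<in> I" "t \<in> T"
  shows "(tadd t (tneg (alpha s t)), s) \<in> I"
proof -
  have "s \<in> S" using assms ideal_subset by auto
  moreover have "pmul (pmul (t, szero) (tzero, s)) (minv (t, szero)) \<in> I"
    using ideal_conj assms by auto
  ultimately show ?thesis using assms(2) by (simp add: asym_mul_def minv_def alpha_tneg)
qed

lemma ideal_centre_sadd:
  assumes "(tzero, s) \<in> I" "(tzero, s') \<in> I"
  shows "(tzero, sadd s s') \<in> I"
  using ideal_padd[OF assms] assms ideal_subset by (auto simp: asym_add_def subset_iff)

lemma ideal_fst_tadd: "(t, s) \<in> I \<Longrightarrow> (t', s') \<in> I \<Longrightarrow> \<exists>\<sigma>. (tadd t t', \<sigma>) \<in> I"
  using ideal_padd[of "(t, s)" "(t', s')"] by (auto simp: asym_add_def)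

lemma ideal_eq_carrier:
  assumes centre: "\<forall>s\<in>S. (tzero, s) \<in> I" and fst_onto: "\<forall>t\<in>T. \<exists>s. (t, s) \<in> I"
  shows "I = B"
proof
  show "B \<subseteq> I"
  proof
    fix x assume "x \<in> B"
    then obtain t s where v: "x = (t, s)" "t \<in> T" "s \<in> S" by auto
    obtain s0 where s0: "(t, s0) \<in> I" using fst_onto v by auto
    have s0S: "s0 \<in> S" using s0 ideal_subset by auto
    have "padd (t, s0) (tzero, sadd s (sneg s0)) \<in> I" using ideal_padd centre s0 v s0S by auto
    moreover have "sadd s0 (sadd s (sneg s0)) = s" using s0S v
      by (metis sa.left_commute sadd_sneg_right sadd_szero_right)
    ultimately show "x \<in> I" using v by (simp add: asym_add_def)
  qed
qed (rule ideal_subset)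

end

end

section \<open>Coordinate vector spaces over Z/(p)\<close>

definition vneg :: "nat \<Rightarrow> nat \<Rightarrow> vec \<Rightarrow> vec" where
  "vneg p d u = (\<lambda>k. if k < d then (- u k) mod int p else 0)"

lemma vadd_assoc: "vadd p d (vadd p d u v) w = vadd p d u (vadd p d v w)"
  by (rule ext) (simp add: vadd_def mod_simps add.assoc)

lemma vadd_comm: "vadd p d u v = vadd p d v u"
  by (rule ext) (simp add: vadd_def add.commute)

lemma vsub_eq_vadd_vneg: "vsub p d u v = vadd p d u (vneg p d v)"
  by (rule ext) (simp add: vsub_def vadd_def vneg_def mod_simps)

lemma vsub_vadd: "vsub p d (vadd p d a b) (vadd p d c e) = vadd p d (vsub p d a c) (vsub p d b e)"
  by (rule ext) (simp add: vsub_def vadd_def mod_simps; simp add: algebra_simps)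

lemma vsub_vneg: "vsub p d (vneg p d a) (vneg p d c) = vneg p d (vsub p d a c)"
  by (rule ext) (simp add: vsub_def vneg_def mod_simps; simp add: algebra_simps)

lemma vsub_vsub: "vsub p d (vsub p d a b) (vsub p d c e) = vsub p d (vsub p d a c) (vsub p d b e)"
  by (rule ext) (simp add: vsub_def mod_simps; simp add: algebra_simps)

lemma vsub_split: "vsub p d a c = vadd p d (vsub p d a e) (vsub p d e c)"
  by (rule ext) (simp add: vsub_def vadd_def mod_simps)

lemma vneg_vsub: "vneg p d (vsub p d w u) = vsub p d u w"
  by (rule ext) (simp add: vsub_def vneg_def mod_simps)

lemma vsub_self [simp]: "vsub p d u u = vzero"
  by (rule ext) (simp add: vsub_def vzero_def)

lemma vzero_Vsp [simp]: "0 < p \<Longrightarrow> vzero \<in> Vsp p d"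
  and vadd_Vsp [simp]: "0 < p \<Longrightarrow> vadd p d u v \<in> Vsp p d"
  and vneg_Vsp [simp]: "0 < p \<Longrightarrow> vneg p d u \<in> Vsp p d"
  and vsub_Vsp [simp]: "0 < p \<Longrightarrow> vsub p d u v \<in> Vsp p d"
  by (simp_all add: Vsp_def vzero_def vadd_def vneg_def vsub_def)

lemma vneg_vzero [simp]: "vneg p d vzero = vzero"
  by (rule ext) (simp add: vneg_def vzero_def)

lemma vadd_vzero_left [simp]: "u \<in> Vsp p d \<Longrightarrow> vadd p d vzero u = u"
  by (rule ext) (auto simp: Vsp_def vadd_def vzero_def not_less)

lemma vadd_vneg_right [simp]: "u \<in> Vsp p d \<Longrightarrow> vadd p d u (vneg p d u) = vzero"
  by (rule ext) (auto simp: Vsp_def vadd_def vzero_def vneg_def mod_simps)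

lemma vadd_vzero_right [simp]: "u \<in> Vsp p d \<Longrightarrow> vadd p d u vzero = u"
  by (metis vadd_comm vadd_vzero_left)

lemma vneg_vneg [simp]: "u \<in> Vsp p d \<Longrightarrow> vneg p d (vneg p d u) = u"
  by (rule ext) (auto simp: Vsp_def vneg_def mod_simps not_less)

lemma vadd_left_cancel:
  assumes "0 < p" "a \<in> Vsp p d" "x \<in> Vsp p d" "y \<in> Vsp p d" "vadd p d a x = vadd p d a y"
  shows "x = y"
proof -
  have "vadd p d (vadd p d (vneg p d a) a) x = vadd p d (vadd p d (vneg p d a) a) y"
    using assms by (simp add: vadd_assoc)
  then show ?thesis using assms by (simp add: vadd_comm[of p d _ a])
qed

lemma vsub_eq_vzero_iff:
  assumes "u \<in> Vsp p d" "v \<in> Vsp p d"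
  shows "vsub p d u v = vzero \<longleftrightarrow> u = v"
proof
  assume uv: "vsub p d u v = vzero"
  show "u = v"
  proof
    fix k
    show "u k = v k"
    proof (cases "k < d")
      case True
      then have "(u k - v k) mod int p = 0" using uv unfolding vsub_def vzero_def by meson
      then have "u k mod int p = v k mod int p" by (simp add: mod_eq_dvd_iff mod_eq_0_iff_dvd)
      then show ?thesis using assms by (simp add: Vsp_def)
    qed (use assms in \<open>simp add: Vsp_def\<close>)
  qed
qed simp

lemma finite_Vsp: "finite (Vsp p d)"
proof (rule finite_subset)
  show "Vsp p d \<subseteq> {v. \<forall>x. (x \<in> {..<d} \<longrightarrow> v x \<in> {0..<int p}) \<and> (x \<notin> {..<d} \<longrightarrow> v x = 0)}"
    by (auto simp: Vsp_def)
qed (rule finite_set_of_finite_funs; simp)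

lemma cprev_less: "0 < n \<Longrightarrow> cprev n z < n"
  by (simp add: cprev_def)

lemma cprev_Suc_mod:
  assumes "z < n" shows "cprev n (Suc z mod n) = z"
proof (cases "Suc z < n")
  case False
  then have "Suc z = n" using assms by simp
  then show ?thesis by (simp add: cprev_def)
qed (simp add: cprev_def)

lemma prime_mod_inverse:
  assumes "prime (q :: nat)" "0 < m" "m < q"
  shows "\<exists>x. (m * x) mod q = 1"
proof -
  have "coprime q m"
    using assms by (simp add: prime_imp_coprime nat_dvd_not_less)
  then obtain x y where "m * x = q * y + 1"
    using bezout_nat[of m q] assms by (auto simp: coprime_iff_gcd_eq_1 gcd.commute)
  then have "(m * x) mod q = 1 mod q" by (metis add.commute mod_mult_self1 mult.commute)
  then show ?thesis using assms prime_gt_1_nat by auto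
qed

lemma orth_grp_closed: "g \<in> orth_grp p d \<beta> \<Longrightarrow> u \<in> Vsp p d \<Longrightarrow> g u \<in> Vsp p d"
  by (auto simp: orth_grp_def bij_betw_def)

lemma orth_grp_funpow:
  assumes g: "g \<in> orth_grp p d \<beta>" shows "g ^^ k \<in> orth_grp p d \<beta>"
proof (induction k)
  case (Suc k)
  have "bij_betw (g ^^ Suc k) (Vsp p d) (Vsp p d)"
    using g by (intro bij_betw_funpow) (simp add: orth_grp_def)
  moreover have "(g ^^ k) u \<in> Vsp p d" if "u \<in> Vsp p d" for u
    using Suc that by (simp add: orth_grp_closed)
  ultimately show ?case
    using Suc g unfolding orth_grp_def by (simp add: orth_grp_closed comp_def)
qed (simp add: orth_grp_def bij_betw_id[unfolded id_def])

lemma orth_grp_vadd: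
  "g \<in> orth_grp p d \<beta> \<Longrightarrow> u \<in> Vsp p d \<Longrightarrow> v \<in> Vsp p d \<Longrightarrow> g (vadd p d u v) = vadd p d (g u) (g v)"
  by (simp add: orth_grp_def)

lemma orth_grp_form:
  "g \<in> orth_grp p d \<beta> \<Longrightarrow> u \<in> Vsp p d \<Longrightarrow> v \<in> Vsp p d \<Longrightarrow> \<beta> (g u) (g v) = \<beta> u v"
  by (simp add: orth_grp_def)

lemma orth_grp_vzero:
  assumes "0 < p" "g \<in> orth_grp p d \<beta>" shows "g vzero = vzero"
  using orth_grp_vadd[OF assms(2), of vzero vzero] orth_grp_closed[OF assms(2), of vzero]
    vadd_left_cancel[of p "g vzero" d vzero "g vzero"] assms(1) by simp

lemma orth_grp_vneg:
  assumes "0 < p" "g \<in> orth_grp p d \<beta>" "u \<in> Vsp p d"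
  shows "g (vneg p d u) = vneg p d (g u)"
proof (rule vadd_left_cancel[OF assms(1)])
  show "vadd p d (g u) (g (vneg p d u)) = vadd p d (g u) (vneg p d (g u))"
    using assms orth_grp_vadd[OF assms(2) assms(3), of "vneg p d u"] orth_grp_vzero[OF assms(1,2)]
      orth_grp_closed[OF assms(2)] by simp
qed (use assms orth_grp_closed in auto)

lemma orth_grp_vsub:
  "0 < p \<Longrightarrow> g \<in> orth_grp p d \<beta> \<Longrightarrow> u \<in> Vsp p d \<Longrightarrow> v \<in> Vsp p d \<Longrightarrow>
    g (vsub p d u v) = vsub p d (g u) (g v)"
  by (simp add: vsub_eq_vadd_vneg orth_grp_vadd orth_grp_vneg)

lemma nonsing_sym_form_vzero:
  assumes \<beta>: "nonsing_sym_form p d \<beta>" and "0 < p" "u \<in> Vsp p d"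
  shows "\<beta> u vzero = 0"
proof -
  let ?x = "\<beta> vzero u"
  have "?x = (?x + ?x) mod int p" and range: "0 \<le> ?x" "?x < int p"
    using \<beta> assms(2,3) unfolding nonsing_sym_form_def by (metis vzero_Vsp vadd_vzero_left)+
  then have "(?x + ?x) mod int p = ?x mod int p" by simp
  then have "int p dvd ?x" by (simp add: mod_eq_dvd_iff)
  then have "?x = 0" using range zdvd_imp_le by force
  then show ?thesis using \<beta> assms(2,3) unfolding nonsing_sym_form_def by (metis vzero_Vsp)
qed

section \<open>The asymmetric product of the theorem\<close>

definition AP_tzero :: tcomp where "AP_tzero = (\<lambda>z i j. vzero)"

definition AP_szero :: scomp where "AP_szero = (\<lambda>z i. 0)"

definition AP_tneg :: "nat \<Rightarrow> (nat \<Rightarrow> nat) \<Rightarrow> (nat \<Rightarrow> nat) \<Rightarrow> (nat \<Rightarrow> nat) \<Rightarrow> tcomp \<Rightarrow> tcomp" where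
  "AP_tneg n p r d t = (\<lambda>z i j. if z < n \<and> i < r z \<and> j < r (cprev n z)
      then vneg (p z) (d z) (t z i j) else vzero)"

definition AP_sneg :: "nat \<Rightarrow> (nat \<Rightarrow> nat) \<Rightarrow> (nat \<Rightarrow> nat) \<Rightarrow> scomp \<Rightarrow> scomp" where
  "AP_sneg n p r s = (\<lambda>z i. if z < n \<and> i < r z then (- s z i) mod int (p z) else 0)"

locale ap_setting =
  fixes n :: nat and p r d :: "nat \<Rightarrow> nat"
    and b :: "nat \<Rightarrow> vec \<Rightarrow> vec \<Rightarrow> int" and f :: "nat \<Rightarrow> vec \<Rightarrow> vec"
  assumes n_pos: "0 < n"
    and prime_p: "\<forall>z<n. prime (p z)"
    and r_pos: "\<forall>z<n. 0 < r z"
    and form: "\<forall>z<n. nonsing_sym_form (p z) (d z) (b z)"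
    and orth: "\<forall>z<n. f z \<in> orth_grp (p z) (d z) (b z)"
    and order: "\<forall>z<n. has_order_on (Vsp (p z) (d z)) (f z) (p (cprev n z))"
begin

abbreviation "V z \<equiv> Vsp (p z) (d z)"
abbreviation "TT \<equiv> AP_T n p r d"
abbreviation "SS \<equiv> AP_S n p r"

lemma p_pos: "z < n \<Longrightarrow> 0 < p z"
  using prime_p prime_gt_0_nat by blast

lemma p_gt_1: "z < n \<Longrightarrow> 1 < p z"
  using prime_p prime_gt_1_nat by blast

lemma cprev_lt_n: "cprev n z < n"
  using n_pos cprev_less by simp

lemma AP_T_entry: "t \<in> TT \<Longrightarrow> z < n \<Longrightarrow> i < r z \<Longrightarrow> j < r (cprev n z) \<Longrightarrow> t z i j \<in> V z"
  and AP_T_outside: "t \<in> TT \<Longrightarrow> \<not> (z < n \<and> i < r z \<and> j < r (cprev n z)) \<Longrightarrow> t z i j = vzero"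
  by (simp_all add: AP_T_def)

lemma AP_S_entry: "s \<in> SS \<Longrightarrow> z < n \<Longrightarrow> i < r z \<Longrightarrow> 0 \<le> s z i \<and> s z i < int (p z)"
  and AP_S_outside: "s \<in> SS \<Longrightarrow> \<not> (z < n \<and> i < r z) \<Longrightarrow> s z i = 0"
  by (simp_all add: AP_S_def)

lemma AP_T_eqI:
  "t \<in> TT \<Longrightarrow> t' \<in> TT \<Longrightarrow> (\<And>z i j. z < n \<Longrightarrow> i < r z \<Longrightarrow> j < r (cprev n z) \<Longrightarrow> t z i j = t' z i j)
    \<Longrightarrow> t = t'"
  by (intro ext) (metis AP_T_outside)

lemma AP_S_eqI:
  "s \<in> SS \<Longrightarrow> s' \<in> SS \<Longrightarrow> (\<And>z i. z < n \<Longrightarrow> i < r z \<Longrightarrow> s z i = s' z i) \<Longrightarrow> s = s'"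
  by (intro ext) (metis AP_S_outside)

lemma b_range: "z < n \<Longrightarrow> u \<in> V z \<Longrightarrow> v \<in> V z \<Longrightarrow> 0 \<le> b z u v \<and> b z u v < int (p z)"
  and b_sym: "z < n \<Longrightarrow> u \<in> V z \<Longrightarrow> v \<in> V z \<Longrightarrow> b z u v = b z v u"
  and b_vadd: "z < n \<Longrightarrow> u \<in> V z \<Longrightarrow> v \<in> V z \<Longrightarrow> w \<in> V z \<Longrightarrow>
    b z (vadd (p z) (d z) u v) w = (b z u w + b z v w) mod int (p z)"
  and b_nondegenerate: "z < n \<Longrightarrow> u \<in> V z \<Longrightarrow> u \<noteq> vzero \<Longrightarrow> \<exists>v\<in>V z. b z u v \<noteq> 0"
  using form unfolding nonsing_sym_form_def by blast+

lemma b_vzero: "z < n \<Longrightarrow> u \<in> V z \<Longrightarrow> b z u vzero = 0"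
  using form p_pos nonsing_sym_form_vzero by blast

lemma f_orth: "z < n \<Longrightarrow> f z \<in> orth_grp (p z) (d z) (b z)"
  using orth by blast

lemma funpow_f_orth: "z < n \<Longrightarrow> f z ^^ k \<in> orth_grp (p z) (d z) (b z)"
  using f_orth orth_grp_funpow by blast

lemma funpow_f_closed: "z < n \<Longrightarrow> u \<in> V z \<Longrightarrow> (f z ^^ k) u \<in> V z"
  using funpow_f_orth orth_grp_closed by blast

lemma funpow_f_period: "z < n \<Longrightarrow> u \<in> V z \<Longrightarrow> (f z ^^ p (cprev n z)) u = u"
  using order unfolding has_order_on_def by blast

lemma funpow_f_mod: "z < n \<Longrightarrow> u \<in> V z \<Longrightarrow> (f z ^^ k) u = (f z ^^ (k mod p (cprev n z))) u"
proof (induction k rule: less_induct)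
  case (less k)
  let ?q = "p (cprev n z)"
  show ?case
  proof (cases "k < ?q")
    case False
    then obtain m where k: "k = m + ?q" by (metis add.commute le_Suc_ex not_less)
    have "(f z ^^ k) u = (f z ^^ m) ((f z ^^ ?q) u)" by (simp add: k funpow_add)
    also have "\<dots> = (f z ^^ (m mod ?q)) u"
      using less funpow_f_period p_pos[OF cprev_lt_n] k by simp
    finally show ?thesis by (simp add: k)
  qed simp
qed

lemma AP_tzero_closed [simp]: "AP_tzero \<in> TT"
  and AP_tadd_closed [simp]: "AP_tadd n p r d t t' \<in> TT"
  and AP_tneg_closed [simp]: "AP_tneg n p r d t \<in> TT"
  and AP_szero_closed [simp]: "AP_szero \<in> SS"
  and AP_sadd_closed [simp]: "AP_sadd n p r s s' \<in> SS"
  and AP_sneg_closed [simp]: "AP_sneg n p r s \<in> SS"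
  and AP_b_closed [simp]: "AP_b n p r b t t' \<in> SS"
  by (auto simp: AP_T_def AP_S_def AP_tzero_def AP_tadd_def AP_tneg_def AP_szero_def AP_sadd_def
      AP_sneg_def AP_b_def p_pos)

lemma AP_alpha_closed [simp]: "t \<in> TT \<Longrightarrow> AP_alpha n p r f s t \<in> TT"
  by (auto simp: AP_T_def AP_alpha_def p_pos funpow_f_closed AP_T_entry)

lemma AP_tadd_ac: "abel_semigroup (AP_tadd n p r d)"
proof
  fix a b c
  show "AP_tadd n p r d (AP_tadd n p r d a b) c = AP_tadd n p r d a (AP_tadd n p r d b c)"
    by (intro ext) (simp add: AP_tadd_def vadd_assoc)
  show "AP_tadd n p r d a b = AP_tadd n p r d b a"
    by (intro ext) (simp add: AP_tadd_def vadd_comm)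
qed

lemma AP_sadd_ac: "abel_semigroup (AP_sadd n p r)"
  by unfold_locales (simp_all add: AP_sadd_def mod_add_left_eq mod_add_right_eq ac_simps fun_eq_iff)

lemma AP_tadd_tzero: "t \<in> TT \<Longrightarrow> AP_tadd n p r d AP_tzero t = t"
  unfolding AP_tadd_def AP_tzero_def by (intro ext) (auto simp: AP_T_entry AP_T_outside)

lemma AP_tadd_tneg: "t \<in> TT \<Longrightarrow> AP_tadd n p r d t (AP_tneg n p r d t) = AP_tzero"
  unfolding AP_tadd_def AP_tzero_def AP_tneg_def by (intro ext) (auto simp: AP_T_entry AP_T_outside)

lemma AP_sadd_szero: "s \<in> SS \<Longrightarrow> AP_sadd n p r AP_szero s = s"
  unfolding AP_sadd_def AP_szero_def by (intro ext) (auto simp: AP_S_entry AP_S_outside)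

lemma AP_sadd_sneg: "s \<in> SS \<Longrightarrow> AP_sadd n p r s (AP_sneg n p r s) = AP_szero"
  unfolding AP_sadd_def AP_szero_def AP_sneg_def by (intro ext) (auto simp: mod_add_right_eq)

lemma AP_alpha_szero: "t \<in> TT \<Longrightarrow> AP_alpha n p r f AP_szero t = t"
  unfolding AP_alpha_def AP_szero_def by (intro ext) (auto simp: AP_T_outside)

lemma AP_b_vadd:
  assumes "t \<in> TT" "t' \<in> TT" "t'' \<in> TT"
  shows "AP_b n p r b (AP_tadd n p r d t t') t'' = AP_sadd n p r (AP_b n p r b t t'') (AP_b n p r b t' t'')"
proof (intro ext)
  fix z i
  show "AP_b n p r b (AP_tadd n p r d t t') t'' z i = AP_sadd n p r (AP_b n p r b t t'') (AP_b n p r b t' t'') z i"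
  proof (cases "z < n \<and> i < r z")
    case True
    let ?R = "r (cprev n z)" and ?p = "int (p z)"
    have "(\<Sum>j<?R. b z (AP_tadd n p r d t t' z i j) (t'' z i j))
        = (\<Sum>j<?R. (b z (t z i j) (t'' z i j) + b z (t' z i j) (t'' z i j)) mod ?p)"
      using True assms by (intro sum.cong) (auto simp: AP_tadd_def b_vadd AP_T_entry)
    then have "(\<Sum>j<?R. b z (AP_tadd n p r d t t' z i j) (t'' z i j)) mod ?p
       = ((\<Sum>j<?R. b z (t z i j) (t'' z i j)) mod ?p + (\<Sum>j<?R. b z (t' z i j) (t'' z i j)) mod ?p) mod ?p"
      by (simp add: mod_sum_eq sum.distrib mod_add_eq)
    then show ?thesis using True by (auto simp: AP_b_def AP_sadd_def)
  qed (auto simp: AP_b_def AP_sadd_def)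
qed

lemma funpow_f_compose_mod:
  assumes "z < n" "u \<in> V z" "0 \<le> a" "a < int (p (cprev n z))" "0 \<le> a'" "a' < int (p (cprev n z))"
  shows "(f z ^^ nat ((a + a') mod int (p (cprev n z)))) u = (f z ^^ nat a) ((f z ^^ nat a') u)"
proof -
  have "(f z ^^ nat a) ((f z ^^ nat a') u) = (f z ^^ (nat a + nat a')) u"
    by (simp add: funpow_add)
  also have "\<dots> = (f z ^^ ((nat a + nat a') mod p (cprev n z))) u"
    using funpow_f_mod assms(1,2) by blast
  also have "(nat a + nat a') mod p (cprev n z) = nat ((a + a') mod int (p (cprev n z)))"
    using assms by (simp add: nat_mod_distrib nat_add_distrib)
  finally show ?thesis by simp
qed

lemma AP_alpha_sadd:
  assumes "s \<in> SS" "s' \<in> SS" "t \<in> TT"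
  shows "AP_alpha n p r f (AP_sadd n p r s s') t = AP_alpha n p r f s (AP_alpha n p r f s' t)"
proof (rule ext, rule ext, rule ext)
  fix z i j
  show "AP_alpha n p r f (AP_sadd n p r s s') t z i j = AP_alpha n p r f s (AP_alpha n p r f s' t) z i j"
  proof (cases "z < n \<and> i < r z \<and> j < r (cprev n z)")
    case True
    then show ?thesis
      using assms cprev_lt_n AP_S_entry[OF assms(1) cprev_lt_n, of j] AP_S_entry[OF assms(2) cprev_lt_n, of j]
      by (auto simp: AP_alpha_def AP_sadd_def funpow_f_compose_mod AP_T_entry)
  qed (auto simp: AP_alpha_def)
qed

sublocale ap: asym_product TT "AP_tadd n p r d" AP_tzero "AP_tneg n p r d" SS "AP_sadd n p r" AP_szero
  "AP_sneg n p r" "AP_b n p r b" "AP_alpha n p r f"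
proof (rule asym_product.intro)
  fix t t' s
  assume t: "t \<in> TT" "t' \<in> TT"
  show "AP_b n p r b t t' = AP_b n p r b t' t"
    unfolding AP_b_def using t
    by (intro ext) (auto intro!: arg_cong[where f = "\<lambda>x. x mod _"] sum.cong b_sym AP_T_entry)
  show "AP_b n p r b (AP_alpha n p r f s t) (AP_alpha n p r f s t') = AP_b n p r b t t'"
    unfolding AP_b_def AP_alpha_def using t
    by (intro ext) (auto intro!: arg_cong[where f = "\<lambda>x. x mod _"] sum.cong
        simp: orth_grp_form[OF funpow_f_orth] AP_T_entry)
  show "AP_alpha n p r f s (AP_tadd n p r d t t') = AP_tadd n p r d (AP_alpha n p r f s t) (AP_alpha n p r f s t')"
    unfolding AP_alpha_def AP_tadd_def using t
    by (intro ext) (auto simp: orth_grp_vadd[OF funpow_f_orth] AP_T_entry)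
qed (simp_all add: AP_tadd_ac AP_sadd_ac AP_tadd_tzero AP_tadd_tneg AP_sadd_szero AP_sadd_sneg
    AP_b_vadd AP_alpha_szero AP_alpha_sadd)

lemma AP_brace_eq:
  "AP_carrier n p r d = TT \<times> SS"
  "AP_add n p r d b = asym_add (AP_tadd n p r d) (AP_sadd n p r) (AP_b n p r b)"
  "AP_mul n p r d f = asym_mul (AP_tadd n p r d) (AP_sadd n p r) (AP_alpha n p r f)"
  by (simp_all add: AP_carrier_def AP_add_def asym_add_def AP_mul_def asym_mul_def fun_eq_iff)

end

definition tsingle :: "nat \<Rightarrow> nat \<Rightarrow> nat \<Rightarrow> vec \<Rightarrow> tcomp" where
  "tsingle z i j u = (\<lambda>z' i' j'. if z' = z \<and> i' = i \<and> j' = j then u else vzero)"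

definition ssingle :: "nat \<Rightarrow> nat \<Rightarrow> int \<Rightarrow> scomp" where
  "ssingle z i c = (\<lambda>z' i'. if z' = z \<and> i' = i then c else 0)"

lemma ssingle_eq_AP_szero_iff: "ssingle z i c = AP_szero \<longleftrightarrow> c = 0"
  by (auto simp: ssingle_def AP_szero_def fun_eq_iff)

context ap_setting
begin

lemma tsingle_closed: "z < n \<Longrightarrow> i < r z \<Longrightarrow> j < r (cprev n z) \<Longrightarrow> u \<in> V z \<Longrightarrow> tsingle z i j u \<in> TT"
  by (auto simp: AP_T_def tsingle_def p_pos)

lemma ssingle_closed: "z < n \<Longrightarrow> i < r z \<Longrightarrow> 0 \<le> c \<Longrightarrow> c < int (p z) \<Longrightarrow> ssingle z i c \<in> SS"
  by (auto simp: AP_S_def ssingle_def p_pos)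

lemma ssingle_one_closed: "z < n \<Longrightarrow> i < r z \<Longrightarrow> ssingle z i 1 \<in> SS"
  using ssingle_closed p_gt_1 by simp

lemma AP_S_nontrivial: "ssingle 0 0 1 \<in> SS - {AP_szero}"
  using ssingle_one_closed[of 0 0] n_pos r_pos by (simp add: ssingle_eq_AP_szero_iff)

subsection \<open>A proper ideal when some f_z - id is not bijective\<close>

definition f_minus_id :: "nat \<Rightarrow> vec \<Rightarrow> vec" where
  "f_minus_id z u = vsub (p z) (d z) (f z u) u"

lemma f_minus_id_closed: "z < n \<Longrightarrow> f_minus_id z u \<in> V z"
  by (simp add: f_minus_id_def p_pos)

lemma f_minus_id_vadd:
  "z < n \<Longrightarrow> u \<in> V z \<Longrightarrow> v \<in> V z \<Longrightarrow>
    f_minus_id z (vadd (p z) (d z) u v) = vadd (p z) (d z) (f_minus_id z u) (f_minus_id z v)"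
  by (simp add: f_minus_id_def orth_grp_vadd[OF f_orth] vsub_vadd)

lemma f_minus_id_vneg:
  "z < n \<Longrightarrow> u \<in> V z \<Longrightarrow> f_minus_id z (vneg (p z) (d z) u) = vneg (p z) (d z) (f_minus_id z u)"
  by (simp add: f_minus_id_def orth_grp_vneg[OF p_pos f_orth] vsub_vneg)

lemma funpow_f_minus_id_in_image:
  assumes "z < n" "u \<in> V z"
  shows "vsub (p z) (d z) ((f z ^^ k) u) u \<in> f_minus_id z ` V z"
proof (induction k)
  case 0
  have "f_minus_id z vzero = vzero" using assms by (simp add: f_minus_id_def orth_grp_vzero[OF p_pos f_orth])
  then show ?case using assms p_pos by (metis funpow_0 image_eqI vsub_self vzero_Vsp)
next
  case (Suc k)
  then obtain v where v: "v \<in> V z" "vsub (p z) (d z) ((f z ^^ k) u) u = f_minus_id z v" by auto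
  have fk: "(f z ^^ k) u \<in> V z" using assms funpow_f_closed by blast
  have "vsub (p z) (d z) ((f z ^^ Suc k) u) u
      = vadd (p z) (d z) (f_minus_id z ((f z ^^ k) u)) (vsub (p z) (d z) ((f z ^^ k) u) u)"
    unfolding f_minus_id_def funpow.simps comp_apply by (rule vsub_split)
  also have "\<dots> = f_minus_id z (vadd (p z) (d z) ((f z ^^ k) u) v)"
    using v fk assms by (simp add: f_minus_id_vadd)
  finally show ?case using assms p_pos by auto
qed

lemma vadd_in_f_minus_id_image:
  assumes "z < n" "a \<in> f_minus_id z ` V z" "c \<in> f_minus_id z ` V z"
  shows "vadd (p z) (d z) a c \<in> f_minus_id z ` V z"
proof -
  obtain x y where "x \<in> V z" "y \<in> V z" "a = f_minus_id z x" "c = f_minus_id z y" using assms by blast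
  then show ?thesis using assms(1) p_pos by (metis f_minus_id_vadd image_eqI vadd_Vsp)
qed

lemma vneg_in_f_minus_id_image:
  assumes "z < n" "a \<in> f_minus_id z ` V z"
  shows "vneg (p z) (d z) a \<in> f_minus_id z ` V z"
proof -
  obtain x where "x \<in> V z" "a = f_minus_id z x" using assms by blast
  then show ?thesis using assms(1) p_pos by (metis f_minus_id_vneg image_eqI vneg_Vsp)
qed

definition T_image_at :: "nat \<Rightarrow> tcomp set" where
  "T_image_at z = {t \<in> TT. \<forall>i j. i < r z \<and> j < r (cprev n z) \<longrightarrow> t z i j \<in> f_minus_id z ` V z}"

lemma T_image_at_tzero:
  assumes "z < n" shows "AP_tzero \<in> T_image_at z"
proof -
  have "vzero \<in> f_minus_id z ` V z" using funpow_f_minus_id_in_image[of z vzero 0] assms p_pos by simp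
  with AP_tzero_closed show ?thesis by (simp add: T_image_at_def AP_tzero_def)
qed

lemma T_image_at_tadd:
  assumes z: "z < n" and t: "t \<in> T_image_at z" "t' \<in> T_image_at z"
  shows "AP_tadd n p r d t t' \<in> T_image_at z"
proof -
  have "AP_tadd n p r d t t' z i j \<in> f_minus_id z ` V z" if "i < r z" "j < r (cprev n z)" for i j
    using t z that by (simp add: T_image_at_def AP_tadd_def vadd_in_f_minus_id_image)
  then show ?thesis by (simp add: T_image_at_def)
qed

lemma T_image_at_tneg:
  assumes z: "z < n" and t: "t \<in> T_image_at z"
  shows "AP_tneg n p r d t \<in> T_image_at z"
proof -
  have "AP_tneg n p r d t z i j \<in> f_minus_id z ` V z" if "i < r z" "j < r (cprev n z)" for i j
    using t z that by (simp add: T_image_at_def AP_tneg_def vneg_in_f_minus_id_image)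
  then show ?thesis by (simp add: T_image_at_def)
qed

lemma T_image_at_alpha_defect:
  assumes z: "z < n" and "s \<in> SS" "t \<in> TT"
  shows "AP_tadd n p r d t (AP_tneg n p r d (AP_alpha n p r f s t)) \<in> T_image_at z"
proof -
  have "vadd (p z) (d z) a (vneg (p z) (d z) ((f z ^^ k) a)) \<in> f_minus_id z ` V z" if "a \<in> V z" for a k
  proof -
    have "vneg (p z) (d z) (vsub (p z) (d z) ((f z ^^ k) a) a) \<in> f_minus_id z ` V z"
      by (rule vneg_in_f_minus_id_image[OF z funpow_f_minus_id_in_image[OF z that]])
    then show ?thesis by (metis vneg_vsub vsub_eq_vadd_vneg)
  qed
  then have "AP_tadd n p r d t (AP_tneg n p r d (AP_alpha n p r f s t)) z i j \<in> f_minus_id z ` V z"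
    if "i < r z" "j < r (cprev n z)" for i j
    using assms that AP_T_entry by (simp add: AP_tadd_def AP_tneg_def AP_alpha_def)
  then show ?thesis by (simp add: T_image_at_def)
qed

lemma T_image_at_proper:
  assumes z: "z < n" and not_bij: "\<not> bij_betw (f_minus_id z) (V z) (V z)"
  shows "T_image_at z \<noteq> TT"
proof -
  have "f_minus_id z ` V z \<noteq> V z"
    using not_bij finite_Vsp by (metis bij_betw_def finite_surj_inj order_refl)
  then obtain v where v: "v \<in> V z" "v \<notin> f_minus_id z ` V z"
    using f_minus_id_closed z by auto
  have r: "0 < r z" "0 < r (cprev n z)" using r_pos z cprev_lt_n by auto
  then have "tsingle z 0 0 v \<in> TT" using tsingle_closed z v by blast
  moreover have "tsingle z 0 0 v \<notin> T_image_at z" using v r by (auto simp: T_image_at_def tsingle_def)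
  ultimately show ?thesis by blast
qed

lemma not_simple_if_not_bij:
  assumes "z < n" "\<not> bij_betw (f_minus_id z) (V z) (V z)"
  shows "\<not> is_simple_left_brace (AP_carrier n p r d) (AP_add n p r d b) (AP_mul n p r d f)"
  unfolding AP_brace_eq
  using ap.not_simple_if_proper_subgroup[of "T_image_at z"] AP_S_nontrivial assms
    T_image_at_tzero T_image_at_tadd T_image_at_tneg T_image_at_alpha_defect T_image_at_proper
  by (auto simp: T_image_at_def)

subsection \<open>Simplicity when every f_z - id is bijective\<close>

(* mu is invertible modulo the prime order of f_z, so f_z is a power of f_z^mu. *)
lemma funpow_f_fixed_eq_vzero:
  assumes z: "z < n" and inj: "inj_on (f_minus_id z) (V z)"
    and \<mu>: "0 < \<mu>" "\<mu> < p (cprev n z)" and v: "v \<in> V z" "(f z ^^ \<mu>) v = v"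
  shows "v = vzero"
proof -
  have iterate: "(f z ^^ (\<mu> * m)) v = v" for m
  proof (induction m)
    case (Suc m)
    have "(f z ^^ (\<mu> * Suc m)) v = (f z ^^ \<mu>) ((f z ^^ (\<mu> * m)) v)"
      by (simp add: funpow_add add.commute)
    then show ?case using Suc v(2) by simp
  qed simp
  obtain x where x: "(\<mu> * x) mod p (cprev n z) = 1"
    using prime_mod_inverse[OF _ \<mu>] prime_p cprev_lt_n by blast
  have "f z v = (f z ^^ ((\<mu> * x) mod p (cprev n z))) v" using x by simp
  also have "\<dots> = (f z ^^ (\<mu> * x)) v" using funpow_f_mod[OF z v(1)] by simp
  also have "\<dots> = v" by (rule iterate)
  finally have "f_minus_id z v = f_minus_id z vzero"
    using z by (simp add: f_minus_id_def orth_grp_vzero[OF p_pos f_orth])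
  then show ?thesis using inj v(1) z p_pos unfolding inj_on_def by (metis vzero_Vsp)
qed

lemma funpow_f_defect_surj:
  assumes z: "z < n" and bij: "bij_betw (f_minus_id z) (V z) (V z)"
    and \<mu>: "0 < \<mu>" "\<mu> < p (cprev n z)" and y: "y \<in> V z"
  shows "\<exists>w\<in>V z. vadd (p z) (d z) w (vneg (p z) (d z) ((f z ^^ \<mu>) w)) = y"
proof -
  let ?K = "\<lambda>w. vsub (p z) (d z) ((f z ^^ \<mu>) w) w"
  have injK: "inj_on ?K (V z)"
  proof (rule inj_onI)
    fix w1 w2 assume w: "w1 \<in> V z" "w2 \<in> V z" "?K w1 = ?K w2"
    let ?v = "vsub (p z) (d z) w1 w2"
    have vV: "?v \<in> V z" using z p_pos by simp
    \<comment> \<open>vsub_vsub is self-inverse, so it is instantiated to keep the simplifier from looping\<close>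
    have "?K ?v = vsub (p z) (d z) (?K w1) (?K w2)"
      using w z by (simp add: orth_grp_vsub[OF p_pos funpow_f_orth] vsub_vsub[of _ _ "(f z ^^ \<mu>) w1"])
    also have "\<dots> = vzero" using w by simp
    finally have "(f z ^^ \<mu>) ?v = ?v" using vsub_eq_vzero_iff funpow_f_closed[OF z vV] vV by blast
    then have "?v = vzero"
      using funpow_f_fixed_eq_vzero[OF z _ \<mu> vV] bij by (simp add: bij_betw_def)
    then show "w1 = w2" using vsub_eq_vzero_iff w by blast
  qed
  have "?K ` V z \<subseteq> V z" using z p_pos by auto
  then have "?K ` V z = V z" using endo_inj_surj[OF finite_Vsp _ injK] by blast
  moreover have "vneg (p z) (d z) y \<in> V z" using z p_pos by simp
  ultimately have "vneg (p z) (d z) y \<in> ?K ` V z" by simp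
  then obtain w where w: "w \<in> V z" "vneg (p z) (d z) y = ?K w" by (rule imageE)
  have "vadd (p z) (d z) w (vneg (p z) (d z) ((f z ^^ \<mu>) w)) = vneg (p z) (d z) (?K w)"
    by (metis vneg_vsub vsub_eq_vadd_vneg)
  then show ?thesis using w y by (metis vneg_vneg)
qed

lemma AP_S_induct [consumes 1, case_names zero sadd single]:
  assumes s: "s \<in> SS"
    and zero: "P AP_szero" and sadd: "\<And>a a'. P a \<Longrightarrow> P a' \<Longrightarrow> P (AP_sadd n p r a a')"
    and single: "\<And>z i c. z < n \<Longrightarrow> i < r z \<Longrightarrow> 0 \<le> c \<Longrightarrow> c < int (p z) \<Longrightarrow> P (ssingle z i c)"
  shows "P s"
  using s
proof (induction "card {(z, i). z < n \<and> i < r z \<and> s z i \<noteq> 0}" arbitrary: s rule: less_induct)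
  case less
  let ?supp = "\<lambda>s. {(z, i). z < n \<and> i < r z \<and> s z i \<noteq> 0}"
  have fin: "finite (?supp s')" for s'
    by (rule finite_subset[of _ "SIGMA z:{..<n}. {..<r z}"]) auto
  show ?case
  proof (cases "?supp s = {}")
    case True
    then have "s = AP_szero" by (intro AP_S_eqI[OF less.prems AP_szero_closed]) (auto simp: AP_szero_def)
    then show ?thesis using zero by simp
  next
    case False
    then obtain z i where zi: "z < n" "i < r z" "s z i \<noteq> 0" by auto
    define s' where "s' = (\<lambda>z' i'. if z' = z \<and> i' = i then 0 else s z' i')"
    have s'S: "s' \<in> SS" using less.prems p_pos unfolding s'_def AP_S_def by auto
    have "?supp s' = ?supp s - {(z, i)}" by (auto simp: s'_def)
    moreover have "card (?supp s - {(z, i)}) < card (?supp s)"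
      using zi by (intro card_Diff1_less fin) simp
    ultimately have "card (?supp s') < card (?supp s)" by simp
    then have "P s'" using less.hyps s'S by blast
    moreover have r: "0 \<le> s z i" "s z i < int (p z)" using AP_S_entry[OF less.prems zi(1,2)] by auto
    moreover have "s = AP_sadd n p r s' (ssingle z i (s z i))"
      using AP_S_entry[OF less.prems] AP_S_outside[OF less.prems] r
      by (auto simp: AP_sadd_def s'_def ssingle_def fun_eq_iff)
    ultimately show ?thesis using sadd single[OF zi(1,2)] by metis
  qed
qed

lemma AP_T_induct [consumes 1, case_names zero tadd single]:
  assumes t: "t \<in> TT"
    and zero: "P AP_tzero" and tadd: "\<And>a a'. P a \<Longrightarrow> P a' \<Longrightarrow> P (AP_tadd n p r d a a')"
    and single: "\<And>z i j u. z < n \<Longrightarrow> i < r z \<Longrightarrow> j < r (cprev n z) \<Longrightarrow> u \<in> V z \<Longrightarrow> P (tsingle z i j u)"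
  shows "P t"
  using t
proof (induction "card {(z, i, j). z < n \<and> i < r z \<and> j < r (cprev n z) \<and> t z i j \<noteq> vzero}"
    arbitrary: t rule: less_induct)
  case less
  let ?supp = "\<lambda>t. {(z, i, j). z < n \<and> i < r z \<and> j < r (cprev n z) \<and> t z i j \<noteq> vzero}"
  have fin: "finite (?supp t')" for t'
    by (rule finite_subset[of _ "SIGMA z:{..<n}. {..<r z} \<times> {..<r (cprev n z)}"]) auto
  show ?case
  proof (cases "?supp t = {}")
    case True
    then have "t = AP_tzero" by (intro AP_T_eqI[OF less.prems AP_tzero_closed]) (auto simp: AP_tzero_def)
    then show ?thesis using zero by simp
  next
    case False
    then obtain z i j where zij: "z < n" "i < r z" "j < r (cprev n z)" "t z i j \<noteq> vzero" by auto
    define t' where "t' = (\<lambda>z' i' j'. if z' = z \<and> i' = i \<and> j' = j then vzero else t z' i' j')"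
    have t'T: "t' \<in> TT" using less.prems p_pos unfolding t'_def AP_T_def by auto
    have "?supp t' = ?supp t - {(z, i, j)}" by (auto simp: t'_def)
    moreover have "card (?supp t - {(z, i, j)}) < card (?supp t)"
      using zij by (intro card_Diff1_less fin) simp
    ultimately have "card (?supp t') < card (?supp t)" by simp
    then have "P t'" using less.hyps t'T by blast
    moreover have u: "t z i j \<in> V z" using AP_T_entry[OF less.prems zij(1,2,3)] .
    moreover have "t = AP_tadd n p r d t' (tsingle z i j (t z i j))"
      using AP_T_entry[OF less.prems] AP_T_outside[OF less.prems] u
      by (auto simp: AP_tadd_def t'_def tsingle_def fun_eq_iff)
    ultimately show ?thesis using tadd single[OF zij(1,2,3)] by metis
  qed
qed

lemma AP_sadd_ssingle:
  "z < n \<Longrightarrow> i < r z \<Longrightarrow> AP_sadd n p r (ssingle z i a) (ssingle z i a') = ssingle z i ((a + a') mod int (p z))"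
  unfolding AP_sadd_def ssingle_def by (rule ext, rule ext) auto

lemma ssingle_multiples:
  assumes z: "z < n" "k < r z" and \<beta>: "0 < \<beta>" "\<beta> < int (p z)" and c: "0 \<le> c" "c < int (p z)"
    and zero: "P AP_szero" and sadd: "\<And>a a'. P a \<Longrightarrow> P a' \<Longrightarrow> P (AP_sadd n p r a a')"
    and single: "P (ssingle z k \<beta>)"
  shows "P (ssingle z k c)"
proof -
  let ?p = "int (p z)"
  have multiple: "P (ssingle z k ((int m * \<beta>) mod ?p))" for m :: nat
  proof (induction m)
    case 0
    have "ssingle z k 0 = AP_szero" by (simp add: ssingle_eq_AP_szero_iff)
    then show ?case using zero by simp
  next
    case (Suc m)
    have "AP_sadd n p r (ssingle z k ((int m * \<beta>) mod ?p)) (ssingle z k \<beta>) = ssingle z k ((int (Suc m) * \<beta>) mod ?p)"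
      using z by (simp add: AP_sadd_ssingle mod_add_left_eq mod_add_right_eq algebra_simps)
    then show ?case using sadd[OF Suc single] by simp
  qed
  have "0 < nat \<beta>" "nat \<beta> < p z" using \<beta> by auto
  then obtain x where x: "(nat \<beta> * x) mod p z = 1" using prime_mod_inverse prime_p z by blast
  have "(nat c * (nat \<beta> * x)) mod p z = (nat c * ((nat \<beta> * x) mod p z)) mod p z"
    by (simp add: mod_mult_right_eq)
  also have "\<dots> = nat c" using x c by simp
  finally have "int (nat c * (nat \<beta> * x)) mod ?p = c"
    using c by (metis int_nat_eq zmod_int)
  moreover have "int (x * nat c) * \<beta> = int (nat c * (nat \<beta> * x))" using \<beta> c by simp
  ultimately have "(int (x * nat c) * \<beta>) mod ?p = c" by metis
  then show ?thesis using multiple[of "x * nat c"] by simp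
qed

lemma AP_b_tsingle:
  assumes t: "t \<in> TT" and z: "z < n" "i < r z" "j < r (cprev n z)" and w: "w \<in> V z"
  shows "AP_b n p r b t (tsingle z i j w) = ssingle z i (b z (t z i j) w)"
proof (rule ext, rule ext)
  fix z' i'
  show "AP_b n p r b t (tsingle z i j w) z' i' = ssingle z i (b z (t z i j) w) z' i'"
  proof (cases "z' < n \<and> i' < r z'")
    case True
    have "(\<Sum>j'<r (cprev n z'). b z' (t z' i' j') (tsingle z i j w z' i' j')) =
          (\<Sum>j'<r (cprev n z'). if j' = j \<and> z' = z \<and> i' = i then b z (t z i j) w else 0)"
      using True t by (intro sum.cong) (auto simp: tsingle_def b_vzero AP_T_entry)
    also have "\<dots> = (if z' = z \<and> i' = i then b z (t z i j) w else 0)"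
      using z by (auto simp: sum.delta)
    finally show ?thesis using True b_range[OF z(1) AP_T_entry[OF t z] w]
      by (auto simp: AP_b_def ssingle_def)
  qed (use z in \<open>auto simp: AP_b_def ssingle_def\<close>)
qed

lemma AP_alpha_defect_tsingle:
  assumes "z < n" "i < r z" "j < r (cprev n z)"
  shows "AP_tadd n p r d (tsingle z i j u) (AP_tneg n p r d (AP_alpha n p r f s (tsingle z i j u)))
    = tsingle z i j (vadd (p z) (d z) u (vneg (p z) (d z) ((f z ^^ nat (s (cprev n z) j)) u)))"
  unfolding AP_tadd_def AP_tneg_def AP_alpha_def tsingle_def
  by (rule ext, rule ext, rule ext) (use assms p_pos in \<open>auto simp: orth_grp_vzero[OF p_pos funpow_f_orth]\<close>)

lemma V_nontrivial:
  assumes "z < n" shows "\<exists>u\<in>V z. u \<noteq> vzero"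
proof -
  obtain u where u: "u \<in> V z" "(f z ^^ 1) u \<noteq> u"
    using order assms p_gt_1[OF cprev_lt_n] unfolding has_order_on_def by blast
  moreover have "f z vzero = vzero" by (rule orth_grp_vzero[OF p_pos[OF assms] f_orth[OF assms]])
  ultimately have "u \<noteq> vzero" by auto
  with u show ?thesis by blast
qed

definition centre_slice_in :: "(tcomp \<times> scomp) set \<Rightarrow> nat \<Rightarrow> bool" where
  "centre_slice_in J z \<longleftrightarrow> (\<forall>k<r z. \<forall>c. 0 \<le> c \<and> c < int (p z) \<longrightarrow> (AP_tzero, ssingle z k c) \<in> J)"

context
  fixes I assumes I: "is_brace_ideal (TT \<times> SS) ap.padd ap.pmul I"
    and bij: "\<forall>z<n. bij_betw (f_minus_id z) (V z) (V z)"
begin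

lemma ideal_tsingle:
  assumes s: "s \<in> SS" "(AP_tzero, s) \<in> I"
    and z: "z < n" "j < r (cprev n z)" "s (cprev n z) j \<noteq> 0" "k < r z" and y: "y \<in> V z"
  shows "\<exists>\<sigma>. (tsingle z k j y, \<sigma>) \<in> I"
proof -
  let ?\<mu> = "nat (s (cprev n z) j)"
  have "0 < ?\<mu>" "?\<mu> < p (cprev n z)" using AP_S_entry[OF s(1) cprev_lt_n z(2)] z(3) by auto
  then obtain w where w: "w \<in> V z" "vadd (p z) (d z) w (vneg (p z) (d z) ((f z ^^ ?\<mu>) w)) = y"
    using funpow_f_defect_surj[OF z(1)] bij z(1) y by blast
  have "tsingle z k j w \<in> TT" using tsingle_closed z w by blast
  then have "(AP_tadd n p r d (tsingle z k j w) (AP_tneg n p r d (AP_alpha n p r f s (tsingle z k j w))), s) \<in> I"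
    by (rule ap.ideal_alpha_defect[OF I s(2)])
  then show ?thesis using z w by (auto simp: AP_alpha_defect_tsingle)
qed

lemma ideal_ssingle:
  assumes s: "s \<in> SS" "(AP_tzero, s) \<in> I"
    and z: "z < n" "j < r (cprev n z)" "s (cprev n z) j \<noteq> 0" "k < r z"
    and c: "0 \<le> c" "c < int (p z)"
  shows "(AP_tzero, ssingle z k c) \<in> I"
proof -
  obtain y where y: "y \<in> V z" "y \<noteq> vzero" using V_nontrivial z(1) by blast
  obtain w where w: "w \<in> V z" "b z y w \<noteq> 0" using b_nondegenerate[OF z(1) y] by blast
  obtain \<sigma> where "(tsingle z k j y, \<sigma>) \<in> I" using ideal_tsingle[OF s z y(1)] by blast
  moreover have "tsingle z k j w \<in> TT" using tsingle_closed z w by blast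
  ultimately have "(AP_tzero, AP_b n p r b (tsingle z k j y) (tsingle z k j w)) \<in> I"
    using ap.ideal_bf_value[OF I] by fastforce
  moreover have "AP_b n p r b (tsingle z k j y) (tsingle z k j w) = ssingle z k (b z y w)"
    using AP_b_tsingle[OF tsingle_closed[OF z(1,4,2) y(1)] z(1,4,2) w(1)] by (simp add: tsingle_def)
  ultimately have "(AP_tzero, ssingle z k (b z y w)) \<in> I" by simp
  moreover have "0 < b z y w" "b z y w < int (p z)" using b_range[OF z(1) y(1) w(1)] w(2) by auto
  ultimately show ?thesis
    using ssingle_multiples[where P = "\<lambda>s. (AP_tzero, s) \<in> I", OF z(1,4) _ _ c]
      ap.ideal_zero[OF I] ap.ideal_centre_sadd[OF I] by blast
qed

lemma ideal_centre_slice_next: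
  assumes "s \<in> SS" "(AP_tzero, s) \<in> I" "z < n" "j < r z" "s z j \<noteq> 0"
  shows "centre_slice_in I (Suc z mod n)"
  unfolding centre_slice_in_def
  using ideal_ssingle[OF assms(1,2), of "Suc z mod n" j] assms(3-5) n_pos by (simp add: cprev_Suc_mod)

lemma ideal_centre_slice_all:
  assumes "centre_slice_in I z0" "z0 < n" "z < n"
  shows "centre_slice_in I z"
proof -
  have step: "centre_slice_in I (Suc z mod n)" if z: "z < n" "centre_slice_in I z" for z
  proof -
    have "ssingle z 0 1 \<in> SS" "(AP_tzero, ssingle z 0 1) \<in> I"
      using z r_pos p_gt_1 ssingle_one_closed unfolding centre_slice_in_def by auto
    then show ?thesis using ideal_centre_slice_next[of "ssingle z 0 1" z 0] z r_pos by (simp add: ssingle_def)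
  qed
  have "centre_slice_in I ((z0 + m) mod n)" for m
  proof (induction m)
    case (Suc m)
    then have "centre_slice_in I (Suc ((z0 + m) mod n) mod n)" using step n_pos by simp
    then show ?case by (simp add: mod_Suc_eq)
  qed (use assms in simp)
  from this[of "z + n - z0"] show ?thesis using assms(2,3) by simp
qed

lemma ideal_centre_nonzero:
  assumes "I \<noteq> {(AP_tzero, AP_szero)}"
  obtains s z j where "s \<in> SS" "(AP_tzero, s) \<in> I" "z < n" "j < r z" "s z j \<noteq> 0"
proof -
  obtain x where x: "x \<in> I" "x \<noteq> (AP_tzero, AP_szero)" using assms ap.ideal_zero[OF I] by blast
  obtain t \<sigma> where t\<sigma>: "x = (t, \<sigma>)" "t \<in> TT" "\<sigma> \<in> SS" using x ap.ideal_subset[OF I] by auto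
  show ?thesis
  proof (cases "t = AP_tzero")
    case True
    then have "\<sigma> \<noteq> AP_szero" using x t\<sigma> by simp
    then obtain z i where "z < n" "i < r z" "\<sigma> z i \<noteq> 0"
      using AP_S_eqI[OF t\<sigma>(3) AP_szero_closed] by (auto simp: AP_szero_def)
    with t\<sigma> x True show ?thesis using that by blast
  next
    case False
    then obtain z i j where zij: "z < n" "i < r z" "j < r (cprev n z)" "t z i j \<noteq> vzero"
      using AP_T_eqI[OF t\<sigma>(2) AP_tzero_closed] by (auto simp: AP_tzero_def)
    have u: "t z i j \<in> V z" using AP_T_entry[OF t\<sigma>(2) zij(1,2,3)] .
    obtain w where w: "w \<in> V z" "b z (t z i j) w \<noteq> 0" using b_nondegenerate[OF zij(1) u zij(4)] by blast
    have "(AP_tzero, AP_b n p r b t (tsingle z i j w)) \<in> I"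
      using ap.ideal_bf_value[OF I x(1) tsingle_closed[OF zij(1,2,3) w(1)]] t\<sigma> by simp
    then have "(AP_tzero, ssingle z i (b z (t z i j) w)) \<in> I"
      using AP_b_tsingle[OF t\<sigma>(2) zij(1,2,3) w(1)] by simp
    moreover have "ssingle z i (b z (t z i j) w) \<in> SS"
      using ssingle_closed[OF zij(1,2)] b_range[OF zij(1) u w(1)] by blast
    ultimately show ?thesis using that zij(1,2) w(2) by (simp add: ssingle_def)
  qed
qed

lemma ideal_contains_centre:
  assumes "\<forall>z<n. centre_slice_in I z" "s \<in> SS"
  shows "(AP_tzero, s) \<in> I"
  using assms(2)
proof (induction rule: AP_S_induct)
  case zero show ?case by (rule ap.ideal_zero[OF I])
next
  case (sadd a a') then show ?case by (rule ap.ideal_centre_sadd[OF I])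
next
  case (single z i c) then show ?case using assms(1) by (simp add: centre_slice_in_def)
qed

lemma ideal_fst_onto:
  assumes "\<forall>s\<in>SS. (AP_tzero, s) \<in> I" "t \<in> TT"
  shows "\<exists>\<sigma>. (t, \<sigma>) \<in> I"
  using assms(2)
proof (induction rule: AP_T_induct)
  case zero show ?case using ap.ideal_zero[OF I] by blast
next
  case (tadd a a') then show ?case using ap.ideal_fst_tadd[OF I] by blast
next
  case (single z i j u)
  have "ssingle (cprev n z) j 1 \<in> SS" using single cprev_lt_n ssingle_one_closed by blast
  then show ?case
    using ideal_tsingle[of "ssingle (cprev n z) j 1" z j i u] assms(1) single by (simp add: ssingle_def)
qed

lemma ideal_nontrivial_eq_carrier:
  assumes "I \<noteq> {(AP_tzero, AP_szero)}" shows "I = TT \<times> SS"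
proof -
  obtain s z j where "s \<in> SS" "(AP_tzero, s) \<in> I" "z < n" "j < r z" "s z j \<noteq> 0"
    using assms by (rule ideal_centre_nonzero)
  then have "centre_slice_in I (Suc z mod n)" by (rule ideal_centre_slice_next)
  then have "\<forall>z<n. centre_slice_in I z" using ideal_centre_slice_all n_pos by simp
  then have "\<forall>s\<in>SS. (AP_tzero, s) \<in> I" using ideal_contains_centre by blast
  then show ?thesis using ap.ideal_eq_carrier[OF I] ideal_fst_onto by blast
qed

end

lemma simple_if_bij:
  assumes "\<forall>z<n. bij_betw (f_minus_id z) (V z) (V z)"
  shows "is_simple_left_brace (AP_carrier n p r d) (AP_add n p r d b) (AP_mul n p r d f)"
  unfolding AP_brace_eq is_simple_left_brace_def
  using ap.is_left_brace AP_S_nontrivial ideal_nontrivial_eq_carrier[OF _ assms] by auto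

theorem simple_iff_bij:
  "is_simple_left_brace (AP_carrier n p r d) (AP_add n p r d b) (AP_mul n p r d f)
    \<longleftrightarrow> (\<forall>z<n. bij_betw (f_minus_id z) (V z) (V z))"
  using simple_if_bij not_simple_if_not_bij by blast

end

theorem theorem6p2:
  fixes n :: nat and p r d :: "nat \<Rightarrow> nat"
    and b :: "nat \<Rightarrow> vec \<Rightarrow> vec \<Rightarrow> int" and f :: "nat \<Rightarrow> vec \<Rightarrow> vec"
  assumes "1 < n"
    and "\<forall>z<n. prime (p z)"
    and "\<forall>z<n. \<forall>z'<n. z \<noteq> z' \<longrightarrow> p z \<noteq> p z'"
    and "\<forall>z<n. 0 < r z"
    and "\<forall>z<n. nonsing_sym_form (p z) (d z) (b z)"
    and "\<forall>z<n. f z \<in> orth_grp (p z) (d z) (b z)"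
    and "\<forall>z<n. has_order_on (Vsp (p z) (d z)) (f z) (p (cprev n z))"
  shows "is_simple_left_brace (AP_carrier n p r d) (AP_add n p r d b) (AP_mul n p r d f)
     \<longleftrightarrow> (\<forall>z<n. bij_betw (\<lambda>u. vsub (p z) (d z) (f z u) u) (Vsp (p z) (d z)) (Vsp (p z) (d z)))"
proof -
  interpret ap_setting n p r d b f
    using assms by unfold_locales auto
  show ?thesis using simple_iff_bij by (simp add: f_minus_id_def[abs_def])
qed

end
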